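(* Let $D>0$ be an integer with $D\equiv0$ or $1\pmod 4$, let $\varepsilon\in\{\pm1\}$, let $m\in\mathbb{Z}_{>0}$, and suppose $v\in\mathbb{Z}$ satisfies $v^2=m(mD+4\varepsilon)$. Then $m$ is a perfect square. *)

theory Defs
  imports Main
begin

end

theory Submission
  imports Defs "HOL-Computational_Algebra.Nth_Powers"
begin

text \<open>
  Put \<open>b = m D + 4 \<epsilon>\<close>, so that \<open>m b = v\<^sup>2\<close> with \<open>gcd m b = gcd m 4\<close>.
  If \<open>m\<close> is odd, \<open>m\<close> and \<open>b\<close> are coprime and hence both squares. If \<open>4\<close> divides
  \<open>m = 4 a\<close>, then \<open>(v/4)\<^sup>2 = a (a D + \<epsilon>)\<close> with coprime factors, so \<open>a\<close> and \<open>m\<close> are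
  squares. If \<open>m = 2 a\<close> with \<open>a\<close> odd, then \<open>(v/2)\<^sup>2 = a (a D + 2 \<epsilon>)\<close> makes both
  \<open>a\<close> and \<open>a D + 2 \<epsilon>\<close> squares; but \<open>a \<equiv> 1 (mod 4)\<close> forces
  \<open>a D + 2 \<epsilon> \<equiv> D + 2 \<epsilon> \<equiv> 2, 3 (mod 4)\<close>, which no square is.
  The degenerate case \<open>b = 0\<close> means \<open>m D = 4\<close>, and \<open>D \<noteq> 2\<close> leaves \<open>m \<in> {1, 4}\<close>.
\<close>

lemma is_nth_power_int_if_nat:
  fixes x :: int
  assumes "x \<ge> 0" "is_nth_power n (nat x)"
  shows "is_nth_power n x"
proof -
  from assms(2) obtain z where "nat x = z ^ n" by (auto elim: is_nth_powerE)
  then have "x = int z ^ n" using assms(1) by (metis of_nat_power int_nat_eq nat_0_le)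
  then show ?thesis by (rule is_nth_powerI)
qed

lemma is_nth_power_mult_coprime_intD:
  fixes a b :: int
  assumes "coprime a b" "is_nth_power n (a * b)" "a > 0" "b > 0"
  shows "is_nth_power n a" "is_nth_power n b"
proof -
  from assms(2) obtain y where y: "a * b = y ^ n" by (auto elim: is_nth_powerE)
  have "a * b = \<bar>y\<bar> ^ n"
    using y assms(3,4) by (metis abs_of_pos mult_pos_pos power_abs)
  then have "int (nat a * nat b) = int (nat \<bar>y\<bar> ^ n)"
    using assms(3,4) by simp
  then have "is_nth_power n (nat a * nat b)"
    by (auto simp only: of_nat_eq_iff)
  moreover have "coprime (nat a) (nat b)"
    using assms(1,3,4) by (simp flip: coprime_int_iff)
  ultimately have "is_nth_power n (nat a)" "is_nth_power n (nat b)"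
    using is_nth_power_mult_coprime_natD assms(3,4) by auto
  then show "is_nth_power n a" "is_nth_power n b"
    using assms(3,4) by (simp_all add: is_nth_power_int_if_nat)
qed

lemma coprime_mult_add_right_iff:
  fixes a k c :: "'a :: semiring_gcd"
  shows "coprime a (a * k + c) \<longleftrightarrow> coprime a c"
  using gcd_add_mult[of a k c] by (simp add: coprime_iff_gcd_eq_1 mult.commute)

lemma is_square_4_mult_iff:
  fixes x :: int
  shows "is_square (4 * x) \<longleftrightarrow> is_square x"
proof
  assume "is_square (4 * x)"
  then obtain y where y: "4 * x = y ^ 2" by (auto elim: is_nth_powerE)
  have "even (y ^ 2)" unfolding y[symmetric] by simp
  then have "even y" by simp
  then obtain z where "y = 2 * z" by blast
  with y have "x = z ^ 2" by (simp add: power_mult_distrib)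
  then show "is_square x" by (rule is_nth_powerI)
next
  assume "is_square x"
  then obtain z where "x = z ^ 2" by (auto elim: is_nth_powerE)
  then have "4 * x = (2 * z) ^ 2" by (simp add: power_mult_distrib)
  then show "is_square (4 * x)" by (rule is_nth_powerI)
qed

lemma square_mod_4:
  fixes x :: int
  shows "x ^ 2 mod 4 = (if even x then 0 else 1)"
proof (cases "even x")
  case True
  then obtain y where "x = 2 * y" by blast
  then show ?thesis by (simp add: power_mult_distrib)
next
  case False
  then obtain y where "x = 2 * y + 1" by (metis oddE)
  then have "x ^ 2 = 1 + (y ^ 2 + y) * 4" by (simp add: algebra_simps power2_eq_square)
  then have "x ^ 2 mod 4 = 1 mod 4" by (simp only: mod_mult_self1)
  with False show ?thesis by simp
qed

lemma is_square_if_mult_affine_coprime: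
  fixes m D c :: int
  assumes "coprime m c" "m > 0" "m * D + c > 0" "is_square (m * (m * D + c))"
  shows "is_square m" "is_square (m * D + c)"
  using is_nth_power_mult_coprime_intD[of m "m * D + c" 2] assms
  by (simp_all add: coprime_mult_add_right_iff)

lemma is_square_if_mult_eq_4:
  fixes m D :: int
  assumes "D mod 4 = 0 \<or> D mod 4 = 1" "m > 0" "m * D = 4"
  shows "is_square m"
proof -
  have "m dvd 4" using assms(3) by (metis dvd_triv_left)
  then have "m \<le> 4" by (simp add: zdvd_imp_le)
  moreover have "m \<noteq> 3" using \<open>m dvd 4\<close> by auto
  moreover have "m \<noteq> 2"
  proof
    assume "m = 2"
    with assms(3) have "D = 2" by simp
    with assms(1) show False by simp
  qed
  ultimately have "m = 1 \<or> m = 4" using assms(2) by presburger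
  then have "m = 1 ^ 2 \<or> m = 2 ^ 2" by simp
  then show ?thesis by (metis is_nth_powerI)
qed

lemma is_square_mult_affine_4_mult:
  fixes a D \<epsilon> :: int
  assumes "is_unit \<epsilon>" "a > 0" "4 * a * D + 4 * \<epsilon> > 0"
    and "is_square (4 * a * (4 * a * D + 4 * \<epsilon>))"
  shows "is_square (4 * a)"
proof -
  have "4 * a * (4 * a * D + 4 * \<epsilon>) = 4 * (4 * (a * (a * D + \<epsilon>)))"
    by (simp add: algebra_simps)
  with assms(4) have "is_square (a * (a * D + \<epsilon>))"
    by (simp only: is_square_4_mult_iff)
  moreover have "coprime a \<epsilon>" using assms(1) by (rule is_unit_right_imp_coprime)
  moreover have "a * D + \<epsilon> > 0" using assms(3) by simp
  ultimately have "is_square a"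
    using assms(2) is_square_if_mult_affine_coprime(1) by blast
  then show ?thesis by (simp add: is_square_4_mult_iff)
qed

lemma not_is_square_mult_affine_2_mult_odd:
  fixes a D \<epsilon> :: int
  assumes "D mod 4 = 0 \<or> D mod 4 = 1" "\<epsilon> \<in> {1, -1}" "odd a" "a > 0"
    and "2 * a * D + 4 * \<epsilon> > 0"
    and "is_square (2 * a * (2 * a * D + 4 * \<epsilon>))"
  shows False
proof -
  have "2 * a * (2 * a * D + 4 * \<epsilon>) = 4 * (a * (a * D + 2 * \<epsilon>))"
    by (simp add: algebra_simps)
  with assms(6) have square: "is_square (a * (a * D + 2 * \<epsilon>))"
    by (simp only: is_square_4_mult_iff)
  have coprime: "coprime a (2 * \<epsilon>)" using assms(2,3) by auto
  have positive: "a * D + 2 * \<epsilon> > 0" using assms(4,5) by (simp add: algebra_simps)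
  obtain k where k: "a = k ^ 2"
    using is_square_if_mult_affine_coprime(1)[OF coprime assms(4) positive square]
    by (auto elim: is_nth_powerE)
  obtain l where l: "a * D + 2 * \<epsilon> = l ^ 2"
    using is_square_if_mult_affine_coprime(2)[OF coprime assms(4) positive square]
    by (auto elim: is_nth_powerE)
  have "a mod 4 = 1" using k assms(3) by (simp add: square_mod_4)
  then have "l ^ 2 mod 4 = (D + 2 * \<epsilon>) mod 4"
    unfolding l[symmetric] by (metis mod_add_left_eq mod_mult_left_eq mult_1)
  moreover have "l ^ 2 mod 4 \<in> {0, 1}" by (simp add: square_mod_4)
  ultimately have "(D + 2 * \<epsilon>) mod 4 = 0 \<or> (D + 2 * \<epsilon>) mod 4 = 1" by simp
  moreover have "\<epsilon> = 1 \<or> \<epsilon> = -1" using assms(2) by simp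
  ultimately show False using assms(1) by presburger
qed

lemma is_square_mult_affine:
  fixes m D \<epsilon> :: int
  assumes "D mod 4 = 0 \<or> D mod 4 = 1" "\<epsilon> \<in> {1, -1}" "m > 0"
    and positive: "m * D + 4 * \<epsilon> > 0"
    and square: "is_square (m * (m * D + 4 * \<epsilon>))"
  shows "is_square m"
proof -
  have unit: "is_unit \<epsilon>" using assms(2) by auto
  consider "odd m" | a where "m = 2 * a" "odd a" | a where "m = 4 * a"
  proof (cases "odd m")
    case False
    then obtain a where "m = 2 * a" by blast
    then show thesis using that by (cases "odd a") (auto elim: evenE)
  qed
  then show ?thesis
  proof cases
    case 1
    then have "coprime m (2 ^ 2)" by (simp only: coprime_power_right_iff) simp
    moreover have "coprime m \<epsilon>" using unit by (rule is_unit_right_imp_coprime)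
    ultimately have "coprime m (4 * \<epsilon>)" by simp
    then show ?thesis using assms(3) positive square by (rule is_square_if_mult_affine_coprime(1))
  next
    case (2 a)
    then have False
      using not_is_square_mult_affine_2_mult_odd[OF assms(1,2)] assms(3) positive square by simp
    then show ?thesis ..
  next
    case (3 a)
    then show ?thesis
      using is_square_mult_affine_4_mult[OF unit] assms(3) positive square by simp
  qed
qed

theorem mainTheorem9:
  fixes D m v \<epsilon> :: int
  assumes "D > 0"
    and "D mod 4 = 0 \<or> D mod 4 = 1"
    and "\<epsilon> \<in> {1, -1}"
    and "m > 0"
    and "v ^ 2 = m * (m * D + 4 * \<epsilon>)"
  shows "\<exists>k::int. m = k ^ 2"
proof -
  have square: "is_square (m * (m * D + 4 * \<epsilon>))" using assms(5) by (metis is_nth_powerI)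
  have "m * (m * D + 4 * \<epsilon>) \<ge> 0" using assms(5) by (metis zero_le_power2)
  then have "m * D + 4 * \<epsilon> \<ge> 0" using assms(4) by (simp add: zero_le_mult_iff)
  moreover have "m * D > 0" using assms(1,4) by simp
  moreover have "\<epsilon> = 1 \<or> \<epsilon> = -1" using assms(3) by simp
  ultimately consider "m * D = 4" | "m * D + 4 * \<epsilon> > 0" by linarith
  then have "is_square m"
  proof cases
    case 1
    with assms(2,4) show ?thesis by (rule is_square_if_mult_eq_4)
  next
    case 2
    from assms(2-4) this square show ?thesis by (rule is_square_mult_affine)
  qed
  then show ?thesis by (auto simp: is_nth_power_def)
qed

end
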